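(* Let $n,m\in\mathbb{N}$, $f,g\in C[0,1]$ and let $\overline{B}_{n,m}$ be the composite Bernstein operator. Then for every $k\in\{1,\dots,m\}$ and $x\in\left[\frac{k-1}{m},\frac{k}{m}\right]$, $$ \left|\overline{B}_{n,m}(fg;x)-\overline{B}_{n,m}(f;x)\,\overline{B}_{n,m}(g;x)\right|\le\frac14\,\widetilde{\omega}\left(f;2\sqrt{\tfrac{(x-\frac{k-1}{m})(\frac km-x)}{n}}\right)\widetilde{\omega}\left(g;2\sqrt{\tfrac{(x-\frac{k-1}{m})(\frac km-x)}{n}}\right). $$
   Context: For $a<b$, $f:[a,b]\to\mathbb{R}$ and $n\in\mathbb{N}$, $B_n^{[a,b]}(f;x)=\frac{1}{(b-a)^n}\sum_{i=0}^n\binom{n}{i}(x-a)^i(b-x)^{n-i}f\left(a+i\frac{b-a}{n}\right)$. For $1\le k\le m$, $\overline{B}_{n,m}(f;x):=B_n^{[\frac{k-1}{m},\frac{k}{m}]}(f;x)$ for $x\in\left[\frac{k-1}{m},\frac{k}{m}\right]$. For $f\in C[0,1]$, $\omega(f;t)=\sup\{|f(x)-f(y)|:x,y\in[0,1],|x-y|\le t\}$ is the first-order modulus of continuity, and its least concave majorant is $\widetilde{\omega}(f;t)=\sup_{0\le x\le t\le y\le1,\,x\ne y}\frac{(t-x)\omega(f,y)+(y-t)\omega(f,x)}{y-x}$ for $0\le t\le1$, and $\widetilde{\omega}(f;t)=\omega(f,1)$ for $t>1$. *)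

theory Defs
  imports "HOL-Analysis.Analysis"
begin

definition bernstein_int :: "real \<Rightarrow> real \<Rightarrow> nat \<Rightarrow> (real \<Rightarrow> real) \<Rightarrow> real \<Rightarrow> real" where
  "bernstein_int a b n f x =
     (1 / (b - a) ^ n) * (\<Sum>i=0..n. real (n choose i) * (x - a) ^ i * (b - x) ^ (n - i)
        * f (a + real i * (b - a) / real n))"

text \<open>Composite Bernstein operator; at a breakpoint k/m the smallest admissible k is used
 (both adjacent local operators interpolate f there, so the choice is immaterial).\<close>
definition comp_bernstein :: "nat \<Rightarrow> nat \<Rightarrow> (real \<Rightarrow> real) \<Rightarrow> real \<Rightarrow> real" where
  "comp_bernstein n m f x =
     (let k = (LEAST k. 1 \<le> k \<and> k \<le> m \<and> x \<le> real k / real m)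
      in bernstein_int (real (k - 1) / real m) (real k / real m) n f x)"

definition modulus :: "(real \<Rightarrow> real) \<Rightarrow> real \<Rightarrow> real" where
  "modulus f t = Sup {\<bar>f x - f y\<bar> | x y. x \<in> {0..1} \<and> y \<in> {0..1} \<and> \<bar>x - y\<bar> \<le> t}"

definition lcm_modulus :: "(real \<Rightarrow> real) \<Rightarrow> real \<Rightarrow> real" where
  "lcm_modulus f t =
     (if t \<le> 1 then
        Sup {((t - x) * modulus f y + (y - t) * modulus f x) / (y - x) | x y.
               0 \<le> x \<and> x \<le> t \<and> t \<le> y \<and> y \<le> 1 \<and> x \<noteq> y}
      else modulus f 1)"

end

theory Submission
  imports Defs
begin

text \<open>On [a, b] the Bernstein operator at x is the mean of h over the nodes a + k (b - a)/n
  under a binomial distribution whose nodes have mean x and variance (x - a) (b - x)/n.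
  So B(f g) - B(f) B(g) is a covariance, bounded by the product of the standard deviations
  of f and g at the nodes, and it suffices to bound the standard deviation of f by half of
  the concave majorant W of \<omega>(f, -) at T, twice the standard deviation of the nodes.
  Concavity of W gives a line \<omega>(f, h) \<le> W(T) + L (h - T); hence f is within (W(T) - L T)/2
  of an L-Lipschitz function of the nodes, whose standard deviation is at most L T/2.\<close>

section \<open>Weighted means and variances\<close>

definition weighted_mean :: "('a \<Rightarrow> real) \<Rightarrow> ('a \<Rightarrow> real) \<Rightarrow> 'a set \<Rightarrow> real" where
  "weighted_mean p F A = (\<Sum>i\<in>A. p i * F i)"

definition weighted_var :: "('a \<Rightarrow> real) \<Rightarrow> ('a \<Rightarrow> real) \<Rightarrow> 'a set \<Rightarrow> real" where
  "weighted_var p F A = (\<Sum>i\<in>A. p i * (F i - weighted_mean p F A)\<^sup>2)"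

lemma weighted_var_eq_second_moment:
  assumes "sum p A = 1"
  shows "weighted_var p F A = (\<Sum>i\<in>A. p i * (F i)\<^sup>2) - (weighted_mean p F A)\<^sup>2"
proof -
  let ?\<mu> = "weighted_mean p F A"
  have "weighted_var p F A = (\<Sum>i\<in>A. p i * (F i)\<^sup>2 - 2 * ?\<mu> * (p i * F i) + ?\<mu>\<^sup>2 * p i)"
    unfolding weighted_var_def by (rule sum.cong) (auto simp: power2_eq_square algebra_simps)
  also have "\<dots> = (\<Sum>i\<in>A. p i * (F i)\<^sup>2) - 2 * ?\<mu> * ?\<mu> + ?\<mu>\<^sup>2 * sum p A"
    by (simp add: sum.distrib sum_subtractf sum_distrib_left weighted_mean_def)
  finally show ?thesis
    using assms by (simp add: power2_eq_square)
qed

lemma weighted_var_nonneg: "(\<And>i. i \<in> A \<Longrightarrow> 0 \<le> p i) \<Longrightarrow> 0 \<le> weighted_var p F A"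
  unfolding weighted_var_def by (intro sum_nonneg) auto

lemma sqrt_weighted_var_eq_L2_set:
  assumes "\<And>i. i \<in> A \<Longrightarrow> 0 \<le> p i"
  shows "sqrt (weighted_var p F A) = L2_set (\<lambda>i. sqrt (p i) * (F i - weighted_mean p F A)) A"
  unfolding L2_set_def weighted_var_def
  by (rule arg_cong[where f = sqrt], rule sum.cong) (auto simp: power_mult_distrib assms)

lemma weighted_covariance_le:
  assumes "sum p A = 1" "\<And>i. i \<in> A \<Longrightarrow> 0 \<le> p i"
  shows "\<bar>weighted_mean p (\<lambda>i. F i * G i) A - weighted_mean p F A * weighted_mean p G A\<bar>
    \<le> sqrt (weighted_var p F A) * sqrt (weighted_var p G A)"
proof -
  let ?\<mu> = "weighted_mean p F A" and ?\<nu> = "weighted_mean p G A"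
  let ?DF = "\<lambda>i. sqrt (p i) * (F i - ?\<mu>)" and ?DG = "\<lambda>i. sqrt (p i) * (G i - ?\<nu>)"
  have "?DF i * ?DG i = p i * F i * G i - ?\<nu> * (p i * F i) - ?\<mu> * (p i * G i) + ?\<mu> * ?\<nu> * p i"
    if "i \<in> A" for i
  proof -
    have "?DF i * ?DG i = (sqrt (p i) * sqrt (p i)) * ((F i - ?\<mu>) * (G i - ?\<nu>))"
      by (simp only: mult_ac)
    also have "\<dots> = p i * ((F i - ?\<mu>) * (G i - ?\<nu>))"
      using assms(2)[OF that] by simp
    finally show ?thesis
      by (simp add: algebra_simps)
  qed
  then have "(\<Sum>i\<in>A. ?DF i * ?DG i)
      = (\<Sum>i\<in>A. p i * F i * G i - ?\<nu> * (p i * F i) - ?\<mu> * (p i * G i) + ?\<mu> * ?\<nu> * p i)"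
    by (rule sum.cong[OF refl])
  also have "\<dots> = weighted_mean p (\<lambda>i. F i * G i) A - ?\<mu> * ?\<nu>"
    using assms(1)
    by (simp add: sum.distrib sum_subtractf weighted_mean_def mult.assoc
        flip: sum_distrib_left sum_distrib_right)
  finally have cov: "weighted_mean p (\<lambda>i. F i * G i) A - ?\<mu> * ?\<nu> = (\<Sum>i\<in>A. ?DF i * ?DG i)" ..
  have "\<bar>\<Sum>i\<in>A. ?DF i * ?DG i\<bar> \<le> (\<Sum>i\<in>A. \<bar>?DF i\<bar> * \<bar>?DG i\<bar>)"
    by (metis (no_types, lifting) abs_mult sum.cong sum_abs)
  also have "\<dots> \<le> L2_set ?DF A * L2_set ?DG A"
    by (rule L2_set_mult_ineq)
  finally show ?thesis
    unfolding cov using sqrt_weighted_var_eq_L2_set[of A p] assms(2) by simp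
qed

lemma sqrt_weighted_var_le_add:
  assumes "\<And>i. i \<in> A \<Longrightarrow> 0 \<le> p i"
  shows "sqrt (weighted_var p (\<lambda>i. F i + G i) A) \<le> sqrt (weighted_var p F A) + sqrt (weighted_var p G A)"
proof -
  have "weighted_mean p (\<lambda>i. F i + G i) A = weighted_mean p F A + weighted_mean p G A"
    by (simp add: weighted_mean_def algebra_simps sum.distrib)
  then have "sqrt (weighted_var p (\<lambda>i. F i + G i) A)
      = L2_set (\<lambda>i. sqrt (p i) * (F i - weighted_mean p F A) + sqrt (p i) * (G i - weighted_mean p G A)) A"
    using sqrt_weighted_var_eq_L2_set[of A p] assms by (auto intro!: L2_set_cong simp: algebra_simps)
  also have "\<dots> \<le> L2_set (\<lambda>i. sqrt (p i) * (F i - weighted_mean p F A)) A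
      + L2_set (\<lambda>i. sqrt (p i) * (G i - weighted_mean p G A)) A"
    by (rule L2_set_triangle_ineq)
  finally show ?thesis
    using sqrt_weighted_var_eq_L2_set[of A p, OF assms] by simp
qed

lemma sqrt_weighted_var_le_of_abs_le:
  assumes "sum p A = 1" "\<And>i. i \<in> A \<Longrightarrow> 0 \<le> p i" "\<And>i. i \<in> A \<Longrightarrow> \<bar>F i\<bar> \<le> E"
  shows "sqrt (weighted_var p F A) \<le> E"
proof -
  have "weighted_var p F A \<le> (\<Sum>i\<in>A. p i * (F i)\<^sup>2)"
    using weighted_var_eq_second_moment[OF assms(1)] by simp
  also have "\<dots> \<le> (\<Sum>i\<in>A. p i * E\<^sup>2)"
  proof (intro sum_mono mult_left_mono)
    fix i assume "i \<in> A"
    show "(F i)\<^sup>2 \<le> E\<^sup>2"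
      using power_mono[OF assms(3)[OF \<open>i \<in> A\<close>] abs_ge_zero, of 2] by simp
    show "0 \<le> p i"
      using assms(2)[OF \<open>i \<in> A\<close>] .
  qed
  also have "\<dots> = E\<^sup>2"
    using assms(1) by (simp flip: sum_distrib_right)
  finally have "weighted_var p F A \<le> E\<^sup>2" .
  moreover obtain i where "i \<in> A"
    using assms(1) by fastforce
  then have "0 \<le> E"
    using assms(3) abs_ge_zero order_trans by blast
  ultimately show ?thesis
    by (simp add: real_le_lsqrt)
qed

lemma weighted_var_eq_pairwise:
  assumes "sum p A = 1"
  shows "2 * weighted_var p F A = (\<Sum>i\<in>A. \<Sum>j\<in>A. p i * p j * (F i - F j)\<^sup>2)"
proof -
  let ?\<mu> = "weighted_mean p F A" and ?S = "\<Sum>i\<in>A. p i * (F i)\<^sup>2"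
  have "(\<Sum>i\<in>A. \<Sum>j\<in>A. p i * p j * (F i - F j)\<^sup>2)
      = (\<Sum>i\<in>A. \<Sum>j\<in>A. p i * (F i)\<^sup>2 * p j - 2 * (p i * F i) * (p j * F j) + p i * (p j * (F j)\<^sup>2))"
    by (intro sum.cong refl) (simp add: power2_eq_square algebra_simps)
  also have "\<dots> = (\<Sum>i\<in>A. p i * (F i)\<^sup>2 - 2 * (p i * F i) * ?\<mu> + p i * ?S)"
    using assms by (simp add: sum.distrib sum_subtractf weighted_mean_def flip: sum_distrib_left)
  also have "\<dots> = 2 * ?S - 2 * ?\<mu> * ?\<mu>"
    using assms by (simp add: sum.distrib sum_subtractf weighted_mean_def
        flip: sum_distrib_left sum_distrib_right)
  finally show ?thesis
    using weighted_var_eq_second_moment[OF assms, of F] by (simp add: power2_eq_square)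
qed

lemma sqrt_weighted_var_le_Lipschitz:
  assumes "sum p A = 1" "\<And>i. i \<in> A \<Longrightarrow> 0 \<le> p i" "0 \<le> L"
    and "\<And>i j. i \<in> A \<Longrightarrow> j \<in> A \<Longrightarrow> \<bar>F i - F j\<bar> \<le> L * \<bar>z i - z j\<bar>"
  shows "sqrt (weighted_var p F A) \<le> L * sqrt (weighted_var p z A)"
proof -
  have "2 * weighted_var p F A \<le> (\<Sum>i\<in>A. \<Sum>j\<in>A. p i * p j * (L\<^sup>2 * (z i - z j)\<^sup>2))"
    unfolding weighted_var_eq_pairwise[OF assms(1)]
  proof (intro sum_mono mult_left_mono)
    fix i j assume ij: "i \<in> A" "j \<in> A"
    have "\<bar>F i - F j\<bar>\<^sup>2 \<le> (L * \<bar>z i - z j\<bar>)\<^sup>2"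
      using assms(4)[OF ij] by (intro power_mono) auto
    then show "(F i - F j)\<^sup>2 \<le> L\<^sup>2 * (z i - z j)\<^sup>2"
      by (simp add: power_mult_distrib)
    show "0 \<le> p i * p j"
      using assms(2) ij by simp
  qed
  also have "\<dots> = L\<^sup>2 * (2 * weighted_var p z A)"
    unfolding weighted_var_eq_pairwise[OF assms(1)] by (simp add: sum_distrib_left algebra_simps)
  finally have "sqrt (weighted_var p F A) \<le> sqrt (L\<^sup>2 * weighted_var p z A)"
    by (intro real_sqrt_le_mono) simp
  then show ?thesis
    using assms(3) by (simp add: real_sqrt_mult)
qed

lemma Max_minus_dist_Lipschitz:
  fixes F z :: "'a \<Rightarrow> real"
  assumes "finite A" "A \<noteq> {}" "0 \<le> L"
  shows "Max ((\<lambda>j. F j - L * \<bar>s - z j\<bar>) ` A) \<le> Max ((\<lambda>j. F j - L * \<bar>t - z j\<bar>) ` A) + L * \<bar>s - t\<bar>"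
proof -
  have "Max ((\<lambda>j. F j - L * \<bar>s - z j\<bar>) ` A) \<in> (\<lambda>j. F j - L * \<bar>s - z j\<bar>) ` A"
    using assms(1,2) by (intro Max_in) auto
  then obtain j where j: "j \<in> A" "Max ((\<lambda>j. F j - L * \<bar>s - z j\<bar>) ` A) = F j - L * \<bar>s - z j\<bar>"
    by auto
  have "\<bar>t - z j\<bar> \<le> \<bar>s - z j\<bar> + \<bar>s - t\<bar>"
    by arith
  then have "L * \<bar>t - z j\<bar> \<le> L * \<bar>s - z j\<bar> + L * \<bar>s - t\<bar>"
    using assms(3) by (metis distrib_left mult_left_mono)
  moreover have "F j - L * \<bar>t - z j\<bar> \<le> Max ((\<lambda>j. F j - L * \<bar>t - z j\<bar>) ` A)"
    using assms(1) j(1) by (intro Max_ge) auto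
  ultimately show ?thesis
    using j(2) by linarith
qed

text \<open>McShane construction: U is the least L-Lipschitz function of z lying above F on A, and
  - V the greatest one lying below it; their midpoint stays within C/2 of F.\<close>

lemma Lipschitz_approximation:
  fixes F z :: "'a \<Rightarrow> real"
  assumes "finite A" "A \<noteq> {}" "0 \<le> L"
    and "\<And>i j. i \<in> A \<Longrightarrow> j \<in> A \<Longrightarrow> F i - F j \<le> C + L * \<bar>z i - z j\<bar>"
  obtains R where "\<And>i j. \<bar>R i - R j\<bar> \<le> L * \<bar>z i - z j\<bar>"
    and "\<And>i. i \<in> A \<Longrightarrow> \<bar>F i - R i\<bar> \<le> C / 2"
proof -
  define U where "U s = Max ((\<lambda>j. F j - L * \<bar>s - z j\<bar>) ` A)" for s
  define V where "V s = Max ((\<lambda>j. - F j - L * \<bar>s - z j\<bar>) ` A)" for s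
  have U_Lip: "U s \<le> U t + L * \<bar>s - t\<bar>" and V_Lip: "V s \<le> V t + L * \<bar>s - t\<bar>" for s t
    unfolding U_def V_def
    by (rule Max_minus_dist_Lipschitz[OF assms(1-3)])+
  have "F i - L * \<bar>z i - z i\<bar> \<le> U (z i)" and "- F i - L * \<bar>z i - z i\<bar> \<le> V (z i)"
    if "i \<in> A" for i
    unfolding U_def V_def using assms(1) that by (intro Max_ge image_eqI[OF refl]; simp)+
  then have F_le_U: "F i \<le> U (z i)" and neg_F_le_V: "- F i \<le> V (z i)" if "i \<in> A" for i
    using that by auto
  have U_plus_V: "U (z i) + V (z i) \<le> C" for i
  proof -
    have "U (z i) \<in> (\<lambda>j. F j - L * \<bar>z i - z j\<bar>) ` A"
      and "V (z i) \<in> (\<lambda>j. - F j - L * \<bar>z i - z j\<bar>) ` A"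
      unfolding U_def V_def using assms(1,2) by (intro Max_in; simp)+
    then obtain j k where j: "j \<in> A" "U (z i) = F j - L * \<bar>z i - z j\<bar>"
      and k: "k \<in> A" "V (z i) = - F k - L * \<bar>z i - z k\<bar>"
      by auto
    have "\<bar>z j - z k\<bar> \<le> \<bar>z i - z j\<bar> + \<bar>z i - z k\<bar>"
      by arith
    then have "L * \<bar>z j - z k\<bar> \<le> L * \<bar>z i - z j\<bar> + L * \<bar>z i - z k\<bar>"
      using assms(3) by (metis distrib_left mult_left_mono)
    then show ?thesis
      using assms(4)[OF j(1) k(1)] j(2) k(2) by linarith
  qed
  show ?thesis
  proof (rule that[of "\<lambda>i. (U (z i) - V (z i)) / 2"])
    fix i j
    show "\<bar>(U (z i) - V (z i)) / 2 - (U (z j) - V (z j)) / 2\<bar> \<le> L * \<bar>z i - z j\<bar>"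
      using U_Lip[of "z i" "z j"] U_Lip[of "z j" "z i"] V_Lip[of "z i" "z j"] V_Lip[of "z j" "z i"]
      unfolding abs_minus_commute[of "z j" "z i"] by (intro abs_leI) (simp_all add: field_simps)
  next
    fix i assume "i \<in> A"
    then show "\<bar>F i - (U (z i) - V (z i)) / 2\<bar> \<le> C / 2"
      using F_le_U[of i] neg_F_le_V[of i] U_plus_V[of i] by (intro abs_leI) (simp_all add: field_simps)
  qed
qed

text \<open>Splitting F into an L-Lipschitz function of z and a remainder, the first part has
  standard deviation at most L times that of z, i.e. L T/2, and the second at most (W - L T)/2.\<close>

lemma sqrt_weighted_var_le_half:
  fixes F z :: "'a \<Rightarrow> real"
  assumes "finite A" "sum p A = 1" "\<And>i. i \<in> A \<Longrightarrow> 0 \<le> p i" "0 \<le> L"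
    and "\<And>i j. i \<in> A \<Longrightarrow> j \<in> A \<Longrightarrow>
      F i - F j \<le> W + L * (\<bar>z i - z j\<bar> - 2 * sqrt (weighted_var p z A))"
  shows "sqrt (weighted_var p F A) \<le> W / 2"
proof -
  let ?T = "2 * sqrt (weighted_var p z A)"
  have "A \<noteq> {}"
    using assms(2) by auto
  moreover have "F i - F j \<le> (W - L * ?T) + L * \<bar>z i - z j\<bar>" if "i \<in> A" "j \<in> A" for i j
    using assms(5)[OF that] by (simp add: algebra_simps)
  ultimately obtain R where R_Lip: "\<And>i j. \<bar>R i - R j\<bar> \<le> L * \<bar>z i - z j\<bar>"
    and F_minus_R: "\<And>i. i \<in> A \<Longrightarrow> \<bar>F i - R i\<bar> \<le> (W - L * ?T) / 2"
    using Lipschitz_approximation[OF assms(1) _ assms(4)] by blast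
  have "sqrt (weighted_var p F A) \<le> sqrt (weighted_var p R A) + sqrt (weighted_var p (\<lambda>i. F i - R i) A)"
    using sqrt_weighted_var_le_add[OF assms(3), where F = R and G = "\<lambda>i. F i - R i"] by simp
  also have "\<dots> \<le> L * sqrt (weighted_var p z A) + (W - L * ?T) / 2"
    by (intro add_mono sqrt_weighted_var_le_Lipschitz sqrt_weighted_var_le_of_abs_le
        assms(2-4) R_Lip F_minus_R)
  also have "\<dots> = W / 2"
    by (simp add: field_simps)
  finally show ?thesis .
qed

section \<open>Moduli of continuity\<close>

lemma bdd_above_modulus_set:
  fixes f :: "real \<Rightarrow> real"
  assumes "continuous_on {0..1} f"
  shows "bdd_above {\<bar>f x - f y\<bar> | x y. x \<in> {0..1} \<and> y \<in> {0..1} \<and> \<bar>x - y\<bar> \<le> t}"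
proof -
  have "bounded (f ` {0..1})"
    using compact_continuous_image[OF assms] by (simp add: compact_imp_bounded)
  then obtain M where M: "\<forall>x\<in>{0..1}. \<bar>f x\<bar> \<le> M"
    by (auto simp: bounded_iff)
  show ?thesis
  proof (rule bdd_aboveI)
    fix r assume "r \<in> {\<bar>f x - f y\<bar> | x y. x \<in> {0..1} \<and> y \<in> {0..1} \<and> \<bar>x - y\<bar> \<le> t}"
    then obtain x y where "r = \<bar>f x - f y\<bar>" "x \<in> {0..1}" "y \<in> {0..1}"
      by blast
    then show "r \<le> 2 * M"
      using M by (metis abs_triangle_ineq4 add_mono mult_2 order_trans)
  qed
qed

lemma abs_diff_le_modulus:
  assumes "continuous_on {0..1} f" "x \<in> {0..1}" "y \<in> {0..1}" "\<bar>x - y\<bar> \<le> t"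
  shows "\<bar>f x - f y\<bar> \<le> modulus f t"
  unfolding modulus_def
  by (rule cSup_upper[OF _ bdd_above_modulus_set[OF assms(1)]]) (use assms in blast)

lemma modulus_mono:
  assumes "continuous_on {0..1} f" "0 \<le> t" "t \<le> t'"
  shows "modulus f t \<le> modulus f t'"
  unfolding modulus_def[of f t]
proof (rule cSup_least)
  show "{\<bar>f x - f y\<bar> | x y. x \<in> {0..1} \<and> y \<in> {0..1} \<and> \<bar>x - y\<bar> \<le> t} \<noteq> {}"
    using assms(2) by (auto intro!: exI[of _ 0])
  fix r assume "r \<in> {\<bar>f x - f y\<bar> | x y. x \<in> {0..1} \<and> y \<in> {0..1} \<and> \<bar>x - y\<bar> \<le> t}"
  then obtain x y where "r = \<bar>f x - f y\<bar>" "x \<in> {0..1}" "y \<in> {0..1}" "\<bar>x - y\<bar> \<le> t'"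
    using assms(3) by force
  then show "r \<le> modulus f t'"
    using abs_diff_le_modulus[OF assms(1)] by blast
qed

lemma chord_le_lcm_modulus:
  assumes "continuous_on {0..1} f" "0 \<le> u" "u \<le> t" "t \<le> v" "v \<le> 1" "u \<noteq> v"
  shows "((t - u) * modulus f v + (v - t) * modulus f u) / (v - u) \<le> lcm_modulus f t"
proof -
  let ?S = "{((t - x) * modulus f y + (y - t) * modulus f x) / (y - x) | x y.
               0 \<le> x \<and> x \<le> t \<and> t \<le> y \<and> y \<le> 1 \<and> x \<noteq> y}"
  have "bdd_above ?S"
  proof (rule bdd_aboveI)
    fix r assume "r \<in> ?S"
    then obtain x y where r: "r = ((t - x) * modulus f y + (y - t) * modulus f x) / (y - x)"
      and xy: "0 \<le> x" "x \<le> t" "t \<le> y" "y \<le> 1" "x \<noteq> y"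
      by blast
    have "(t - x) * modulus f y \<le> (t - x) * modulus f 1"
      using xy modulus_mono[OF assms(1), of y 1] by (intro mult_left_mono) auto
    moreover have "(y - t) * modulus f x \<le> (y - t) * modulus f 1"
      using xy modulus_mono[OF assms(1), of x 1] by (intro mult_left_mono) auto
    ultimately have "(t - x) * modulus f y + (y - t) * modulus f x \<le> (y - x) * modulus f 1"
      by (simp add: algebra_simps)
    moreover have "0 < y - x"
      using xy by auto
    ultimately show "r \<le> modulus f 1"
      unfolding r by (simp add: pos_divide_le_eq mult.commute)
  qed
  then have "((t - u) * modulus f v + (v - t) * modulus f u) / (v - u) \<le> Sup ?S"
    by (rule cSup_upper[rotated]) (use assms in blast)
  then show ?thesis
    unfolding lcm_modulus_def using assms by simp
qed

lemma modulus_le_lcm_modulus: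
  assumes "continuous_on {0..1} f" "0 \<le> t" "t \<le> 1"
  shows "modulus f t \<le> lcm_modulus f t"
proof (cases "t < 1")
  case True
  then show ?thesis
    using chord_le_lcm_modulus[OF assms(1,2), of t 1] assms by simp
next
  case False
  then show ?thesis
    using chord_le_lcm_modulus[OF assms(1), of 0 t 1] assms by simp
qed

lemma lcm_modulus_chord_slopes:
  assumes "continuous_on {0..1} f" "0 \<le> h" "h < t" "t < h'" "h' \<le> 1"
  shows "(modulus f h' - lcm_modulus f t) * (t - h) \<le> (lcm_modulus f t - modulus f h) * (h' - t)"
proof -
  have "((t - h) * modulus f h' + (h' - t) * modulus f h) / (h' - h) \<le> lcm_modulus f t"
    using chord_le_lcm_modulus[OF assms(1,2)] assms(3-5) by simp
  then have "(t - h) * modulus f h' + (h' - t) * modulus f h \<le> lcm_modulus f t * ((t - h) + (h' - t))"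
    using assms(3,4) by (simp add: pos_divide_le_eq)
  then show ?thesis
    by (simp add: algebra_simps)
qed

text \<open>Concavity of the majorant at t, tested only at finitely many points h: the slope L is the
  steepest chord to the right of t, which by the chord inequality also bounds the chords to the left.\<close>

lemma lcm_modulus_supporting_line:
  assumes "continuous_on {0..1} f" "finite D" "D \<subseteq> {0..1}" "0 \<le> t" "t \<le> 1"
  obtains L where "0 \<le> L" "\<And>h. h \<in> D \<Longrightarrow> modulus f h \<le> lcm_modulus f t + L * (h - t)"
proof -
  let ?W = "lcm_modulus f t"
  define S where "S = insert 0 ((\<lambda>h. (modulus f h - ?W) / (h - t)) ` {h \<in> D. t < h})"
  have "finite S"
    unfolding S_def using assms(2) by simp
  then have L_ge: "r \<le> Max S" if "r \<in> S" for r
    using that by simp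
  have "Max S \<in> S"
    using \<open>finite S\<close> by (intro Max_in) (auto simp: S_def)
  have "modulus f h \<le> ?W + Max S * (h - t)" if h: "h \<in> D" for h
  proof (cases h t rule: linorder_cases)
    case greater
    then have "(modulus f h - ?W) / (h - t) \<le> Max S"
      using h by (intro L_ge) (auto simp: S_def)
    then show ?thesis
      using greater by (simp add: divide_le_eq algebra_simps)
  next
    case equal
    then show ?thesis
      using modulus_le_lcm_modulus[OF assms(1,4,5)] by simp
  next
    case less
    have "0 \<le> h"
      using h assms(3) by auto
    from \<open>Max S \<in> S\<close> consider "Max S = 0"
      | h' where "h' \<in> D" "t < h'" "Max S = (modulus f h' - ?W) / (h' - t)"
      unfolding S_def by blast
    then have "Max S * (t - h) \<le> ?W - modulus f h"
    proof cases
      case 1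
      then show ?thesis
        using modulus_mono[OF assms(1) \<open>0 \<le> h\<close> less_imp_le[OF less]]
          modulus_le_lcm_modulus[OF assms(1,4,5)] by simp
    next
      case (2 h')
      then show ?thesis
        using lcm_modulus_chord_slopes[OF assms(1) \<open>0 \<le> h\<close> less, of h'] assms(3)
        by (auto simp: divide_le_eq mult.commute mult.left_commute)
    qed
    then show ?thesis
      by (simp add: algebra_simps)
  qed
  moreover have "0 \<le> Max S"
    by (rule L_ge) (simp add: S_def)
  ultimately show ?thesis
    using that by blast
qed

lemma sqrt_weighted_var_comp_le_lcm_modulus:
  assumes "continuous_on {0..1} f" "finite A" "sum p A = 1" "\<And>i. i \<in> A \<Longrightarrow> 0 \<le> p i"
    and "\<And>i. i \<in> A \<Longrightarrow> z i \<in> {0..1}" "2 * sqrt (weighted_var p z A) \<le> 1"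
  shows "sqrt (weighted_var p (\<lambda>i. f (z i)) A) \<le> lcm_modulus f (2 * sqrt (weighted_var p z A)) / 2"
proof -
  define T where "T = 2 * sqrt (weighted_var p z A)"
  define D where "D = (\<lambda>(i, j). \<bar>z i - z j\<bar>) ` (A \<times> A)"
  have "finite D"
    unfolding D_def using assms(2) by simp
  moreover have "\<bar>z i - z j\<bar> \<in> {0..1}" if "i \<in> A" "j \<in> A" for i j
    using assms(5)[OF that(1)] assms(5)[OF that(2)] by auto
  then have "D \<subseteq> {0..1}"
    unfolding D_def by auto
  moreover have "0 \<le> T"
    unfolding T_def using weighted_var_nonneg[of A p z] assms(4) by simp
  ultimately obtain L where "0 \<le> L"
    and L: "\<And>h. h \<in> D \<Longrightarrow> modulus f h \<le> lcm_modulus f T + L * (h - T)"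
    using lcm_modulus_supporting_line[OF assms(1)] assms(6) unfolding T_def by blast
  have "f (z i) - f (z j) \<le> lcm_modulus f T + L * (\<bar>z i - z j\<bar> - T)" if "i \<in> A" "j \<in> A" for i j
  proof -
    have "f (z i) - f (z j) \<le> modulus f \<bar>z i - z j\<bar>"
      using abs_diff_le_modulus[OF assms(1) assms(5)[OF that(1)] assms(5)[OF that(2)] order_refl]
      by simp
    also have "\<dots> \<le> lcm_modulus f T + L * (\<bar>z i - z j\<bar> - T)"
      using L that unfolding D_def by force
    finally show ?thesis .
  qed
  then show ?thesis
    unfolding T_def by (intro sqrt_weighted_var_le_half[OF assms(2-4) \<open>0 \<le> L\<close>]) simp
qed

section \<open>Bernstein operators as binomial means\<close>

lemma sum_sq_deviation_Bernstein:
  assumes "1 \<le> n"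
  shows "(\<Sum>k\<le>n. (x - k / n)\<^sup>2 * Bernstein n k x) = x * (1 - x) / n"
proof -
  have split: "(k - n * x)\<^sup>2 * b = k * (k - 1) * b + (1 - 2 * n * x) * (k * b) + (n * x)\<^sup>2 * b"
    for k b :: real
    by (simp add: algebra_simps power2_eq_square)
  have "(\<Sum>k\<le>n. (k - n * x)\<^sup>2 * Bernstein n k x)
      = real n * (real n - 1) * x\<^sup>2 + (1 - 2 * n * x) * (n * x) + (n * x)\<^sup>2"
    by (simp add: split sum.distrib flip: sum_distrib_left)
  also have "\<dots> = n * x * (1 - x)"
    by (simp add: algebra_simps power2_eq_square)
  finally have "(\<Sum>k\<le>n. (k - n * x)\<^sup>2 * Bernstein n k x) / n\<^sup>2 = x * (1 - x) / n"
    by (simp add: power2_eq_square)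
  then show ?thesis
    using assms by (simp add: sum_divide_distrib field_split_simps power2_commute)
qed

lemma bernstein_int_eq_weighted_mean:
  fixes a b :: real
  assumes "a < b"
  shows "bernstein_int a b n h x
    = weighted_mean (\<lambda>k. Bernstein n k ((x - a) / (b - a))) (\<lambda>k. h (a + real k * (b - a) / real n)) {..n}"
  unfolding bernstein_int_def weighted_mean_def atLeast0AtMost sum_distrib_left
proof (rule sum.cong[OF refl])
  fix k assume "k \<in> {..n}"
  then have "(b - a) ^ n = (b - a) ^ k * (b - a) ^ (n - k)"
    by (simp flip: power_add)
  moreover have "1 - (x - a) / (b - a) = (b - x) / (b - a)"
    using assms by (simp add: field_simps)
  ultimately show "1 / (b - a) ^ n * (real (n choose k) * (x - a) ^ k * (b - x) ^ (n - k) * h (a + real k * (b - a) / real n))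
      = Bernstein n k ((x - a) / (b - a)) * h (a + real k * (b - a) / real n)"
    by (simp add: Bernstein_def power_divide)
qed

lemma weighted_mean_Bernstein_nodes:
  fixes a b :: real
  assumes "1 \<le> n" "a < b"
  shows "weighted_mean (\<lambda>k. Bernstein n k ((x - a) / (b - a))) (\<lambda>k. a + real k * (b - a) / real n) {..n} = x"
proof -
  let ?u = "(x - a) / (b - a)"
  have "weighted_mean (\<lambda>k. Bernstein n k ?u) (\<lambda>k. a + real k * (b - a) / real n) {..n}
      = a * (\<Sum>k\<le>n. Bernstein n k ?u) + (b - a) / real n * (\<Sum>k\<le>n. real k * Bernstein n k ?u)"
    unfolding weighted_mean_def sum_distrib_left sum.distrib[symmetric]
    by (intro sum.cong refl) (simp add: algebra_simps)
  also have "\<dots> = x"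
    using assms by simp
  finally show ?thesis .
qed

lemma weighted_var_Bernstein_nodes:
  fixes a b :: real
  assumes "1 \<le> n" "a < b"
  shows "weighted_var (\<lambda>k. Bernstein n k ((x - a) / (b - a))) (\<lambda>k. a + real k * (b - a) / real n) {..n}
    = (x - a) * (b - x) / n"
proof -
  let ?u = "(x - a) / (b - a)"
  have "weighted_var (\<lambda>k. Bernstein n k ?u) (\<lambda>k. a + real k * (b - a) / real n) {..n}
      = (\<Sum>k\<le>n. (b - a)\<^sup>2 * ((?u - k / n)\<^sup>2 * Bernstein n k ?u))"
    unfolding weighted_var_def weighted_mean_Bernstein_nodes[OF assms]
  proof (intro sum.cong refl)
    fix k
    have "a + real k * (b - a) / real n - x = (b - a) * (real k / real n - ?u)"
      using assms(2) by (simp add: field_simps)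
    then show "Bernstein n k ?u * (a + real k * (b - a) / real n - x)\<^sup>2
        = (b - a)\<^sup>2 * ((?u - real k / real n)\<^sup>2 * Bernstein n k ?u)"
      by (simp add: power_mult_distrib power2_commute)
  qed
  also have "\<dots> = (b - a)\<^sup>2 * (?u * (1 - ?u) / n)"
    using sum_sq_deviation_Bernstein[OF assms(1)] by (simp flip: sum_distrib_left)
  also have "\<dots> = ((b - a) * ?u) * ((b - a) * (1 - ?u)) / n"
    by (simp add: power2_eq_square)
  also have "\<dots> = (x - a) * (b - x) / n"
  proof -
    have "(b - a) * ?u = x - a"
      using assms(2) by simp
    moreover from this have "(b - a) * (1 - ?u) = b - x"
      by (simp add: algebra_simps)
    ultimately show ?thesis
      by simp
  qed
  finally show ?thesis .
qed

lemma bernstein_int_product_bound: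
  fixes a b x :: real
  assumes f: "continuous_on {0..1} f" and g: "continuous_on {0..1} g" and "1 \<le> n"
    and "0 \<le> a" "a < b" "b \<le> 1" "a \<le> x" "x \<le> b"
  shows "\<bar>bernstein_int a b n (\<lambda>t. f t * g t) x - bernstein_int a b n f x * bernstein_int a b n g x\<bar>
    \<le> 1/4 * lcm_modulus f (2 * sqrt ((x - a) * (b - x) / n))
          * lcm_modulus g (2 * sqrt ((x - a) * (b - x) / n))"
proof -
  define p where "p k = Bernstein n k ((x - a) / (b - a))" for k
  define z where "z k = a + real k * (b - a) / real n" for k
  define T where "T = 2 * sqrt ((x - a) * (b - x) / n)"
  have p_nonneg: "0 \<le> p k" for k
    unfolding p_def using assms(5,7,8) by (intro Bernstein_nonneg) (auto simp: field_simps)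
  have p_sum: "sum p {..n} = 1"
    by (simp add: p_def)
  have z_mem: "z k \<in> {0..1}" if "k \<in> {..n}" for k
  proof -
    have "real k * (b - a) / real n \<le> b - a"
      using that assms(3,5) by (simp add: divide_simps mult_right_mono)
    then show ?thesis
      using assms(4-6) unfolding z_def by auto
  qed
  have T_eq: "T = 2 * sqrt (weighted_var p z {..n})"
    unfolding T_def p_def z_def weighted_var_Bernstein_nodes[OF assms(3,5)] ..
  have "4 * ((x - a) * (b - x)) \<le> (b - a)\<^sup>2"
    using zero_le_power2[of "(x - a) - (b - x)"] by (simp add: power2_eq_square algebra_simps)
  also have "\<dots> \<le> 1"
    using assms(4-6) by (simp add: power_le_one)
  finally have "(x - a) * (b - x) / n \<le> (1/2)\<^sup>2"
    using assms(3,7,8) by (simp add: divide_simps power2_eq_square)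
  then have "T \<le> 1"
    unfolding T_def using real_le_lsqrt[of "1/2" "(x - a) * (b - x) / n"] by linarith
  then have node_bound: "sqrt (weighted_var p (\<lambda>k. h (z k)) {..n}) \<le> lcm_modulus h T / 2"
    if "continuous_on {0..1} h" for h
    unfolding T_eq using that p_sum p_nonneg z_mem
    by (intro sqrt_weighted_var_comp_le_lcm_modulus) auto
  have "\<bar>bernstein_int a b n (\<lambda>t. f t * g t) x - bernstein_int a b n f x * bernstein_int a b n g x\<bar>
      \<le> sqrt (weighted_var p (\<lambda>k. f (z k)) {..n}) * sqrt (weighted_var p (\<lambda>k. g (z k)) {..n})"
    unfolding bernstein_int_eq_weighted_mean[OF assms(5)] p_def[symmetric] z_def[symmetric]
    using weighted_covariance_le[OF p_sum] p_nonneg by simp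
  also have "\<dots> \<le> (lcm_modulus f T / 2) * (lcm_modulus g T / 2)"
  proof (rule mult_mono[OF node_bound[OF f] node_bound[OF g]])
    have "0 \<le> sqrt (weighted_var p F {..n})" for F
      using weighted_var_nonneg[of "{..n}" p] p_nonneg by simp
    then show "0 \<le> lcm_modulus f T / 2" "0 \<le> sqrt (weighted_var p (\<lambda>k. g (z k)) {..n})"
      using node_bound[OF f] by (blast intro: order_trans)+
  qed
  finally show ?thesis
    unfolding T_def by simp
qed

text \<open>At a breakpoint x = k/m the composite operator uses the interval to the left of x;
  there (x - a) (b - x) = 0, as for the interval with index k.\<close>

lemma comp_bernstein_eq_bernstein_int:
  assumes "1 \<le> k" "k \<le> m" "real (k - 1) / m \<le> x" "x \<le> real k / m"
  obtains a b where "0 \<le> a" "a < b" "b \<le> 1" "a \<le> x" "x \<le> b"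
    and "(x - a) * (b - x) = (x - real (k - 1) / m) * (real k / m - x)"
    and "\<And>h. comp_bernstein n m h x = bernstein_int a b n h x"
proof -
  define K where "K = (LEAST k. 1 \<le> k \<and> k \<le> m \<and> x \<le> real k / real m)"
  have K: "1 \<le> K" "K \<le> m" "x \<le> real K / m"
    using LeastI[of "\<lambda>k. 1 \<le> k \<and> k \<le> m \<and> x \<le> real k / real m" k] assms
    unfolding K_def by auto
  have "K \<le> k"
    unfolding K_def using assms by (intro Least_le) auto
  have "0 < real m"
    using assms(1,2) by simp
  have "real (K - 1) / m \<le> real (k - 1) / m"
    using \<open>K \<le> k\<close> \<open>0 < real m\<close> by (simp add: divide_right_mono)
  moreover have "(x - real (K - 1) / m) * (real K / m - x) = (x - real (k - 1) / m) * (real k / m - x)"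
  proof (cases "K = k")
    case False
    then have "real K / m \<le> real (k - 1) / m"
      using \<open>K \<le> k\<close> \<open>0 < real m\<close> by (simp add: divide_right_mono)
    then have "real K / m - x = 0" "x - real (k - 1) / m = 0"
      using K(3) assms(3) by linarith+
    then show ?thesis
      by (simp only: mult_zero_left mult_zero_right)
  qed simp
  moreover have "comp_bernstein n m h x = bernstein_int (real (K - 1) / m) (real K / m) n h x" for h
    unfolding comp_bernstein_def K_def[symmetric] Let_def ..
  ultimately show ?thesis
    using that[of "real (K - 1) / m" "real K / m"] K assms(3) \<open>0 < real m\<close>
    by (simp add: divide_strict_right_mono of_nat_diff)
qed

theorem mainTheorem3:
  fixes n m k :: nat and f g :: "real \<Rightarrow> real" and x :: real
  assumes "n \<ge> 1" and "m \<ge> 1"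
    and "continuous_on {0..1} f" and "continuous_on {0..1} g"
    and "1 \<le> k" and "k \<le> m"
    and "real (k - 1) / real m \<le> x" and "x \<le> real k / real m"
  shows "\<bar>comp_bernstein n m (\<lambda>t. f t * g t) x - comp_bernstein n m f x * comp_bernstein n m g x\<bar>
    \<le> 1/4 * lcm_modulus f (2 * sqrt ((x - real (k - 1) / real m) * (real k / real m - x) / real n))
          * lcm_modulus g (2 * sqrt ((x - real (k - 1) / real m) * (real k / real m - x) / real n))"
proof -
  obtain a b where ab: "0 \<le> a" "a < b" "b \<le> 1" "a \<le> x" "x \<le> b"
    and width: "(x - a) * (b - x) = (x - real (k - 1) / m) * (real k / m - x)"
    and local: "\<And>h. comp_bernstein n m h x = bernstein_int a b n h x"
    using comp_bernstein_eq_bernstein_int[OF assms(5-8), where n = n] by blast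
  show ?thesis
    unfolding local width[symmetric]
    using bernstein_int_product_bound[OF assms(3,4,1) ab] .
qed

end
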